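(* Let $P,N_0,B>0$, $\mathrm{SNR}=\frac{P}{BN_0}<1$, $\alpha\in(0,1]$, $\epsilon\in(0,\alpha)$, $\delta=\mathrm{SNR}^{1-\alpha}$, and $L_c=B_cT_c$. If there exists $\sigma\in(0,\epsilon)$ such that \[ L_c=\frac{N_{\mathrm{t}}^2}{(N_\mathrm{r}+N_\mathrm{t})^2}\mathrm{SNR}^{-2(\sigma+\alpha)}, \] then \[ \delta B <\frac{P}{N_0}\frac{N_\mathrm{r}+N_\mathrm{t}}{N_\mathrm{t}}\sqrt{B_cT_c}\qquad\text{and}\qquad \delta B^{1+\epsilon} >\left(\frac{P}{N_0}\right)^{1+\epsilon}\frac{N_\mathrm{r}+N_\mathrm{t}}{N_\mathrm{t}}\sqrt{B_cT_c}. \]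
   Context: $P$ is the average transmit power, $N_0$ the noise power spectral density, $B$ the bandwidth, $N_{\mathrm{t}},N_{\mathrm{r}}$ the numbers of transmit and receive antennas, $T_c$ the coherence time and $B_c$ the coherence bandwidth of a block-fading channel, $L_c=B_cT_c$ the coherence length, and $\delta\in(0,1]$ the transmission duty cycle (peakiness parameter). *)

theory Defs
  imports "HOL-Analysis.Analysis"
begin

end

theory Submission
  imports Defs
begin

text \<open>Write \<open>s = SNR\<close> and \<open>c = (N\<^sub>r + N\<^sub>t) / N\<^sub>t\<close>. The hypothesis on \<open>L\<^sub>c\<close> says
  \<open>\<surd>(B\<^sub>cT\<^sub>c) = s\<^bsup>-(\<sigma>+\<alpha>)\<^esup> / c\<close>, and \<open>P/N\<^sub>0 = s B\<close>. Hence for every exponent \<open>p\<close>,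
  \<open>(P/N\<^sub>0)\<^sup>p c \<surd>(B\<^sub>cT\<^sub>c) = B\<^sup>p s\<^bsup>p-\<sigma>-\<alpha>\<^esup>\<close>, while \<open>\<delta> B\<^sup>p = B\<^sup>p s\<^bsup>1-\<alpha>\<^esup>\<close>. As \<open>0 < s < 1\<close>,
  powers of \<open>s\<close> decrease in the exponent, and the two claims are the cases
  \<open>p = 1\<close> (exponent \<open>1-\<alpha>-\<sigma> < 1-\<alpha>\<close>) and \<open>p = 1+\<epsilon>\<close> (exponent \<open>1-\<alpha>+\<epsilon>-\<sigma> > 1-\<alpha>\<close>).\<close>

lemma sqrt_square_mult_powr:
  fixes a x t :: real
  assumes "0 < x"
  shows "sqrt (a^2 * x powr (2 * t)) = \<bar>a\<bar> * x powr t"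
proof -
  have "a^2 * x powr (2 * t) = (a * x powr t)^2"
    using assms by (simp add: power_mult_distrib powr_realpow[symmetric] powr_powr mult.commute)
  then show ?thesis
    by (simp add: abs_mult)
qed

lemma powr_scaled_product_eq:
  fixes s B c p q :: real
  assumes "0 < s" and "0 < B" and "c \<noteq> 0"
  shows "(s * B) powr p * c * (s powr q / c) = B powr p * s powr (p + q)"
  using assms by (simp add: powr_mult powr_add)

theorem corollary3:
  fixes P N0 B Bc Tc Lc alpha eps delta SNR :: real and Nt Nr :: nat
  assumes "P > 0" and "N0 > 0" and "B > 0"
    and "Bc > 0" and "Tc > 0"
    and "Nt \<ge> 1" and "Nr \<ge> 1"
    and "SNR = P / (B * N0)" and "SNR < 1"
    and "0 < alpha" and "alpha \<le> 1"
    and "0 < eps" and "eps < alpha"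
    and "delta = SNR powr (1 - alpha)"
    and "Lc = Bc * Tc"
    and "\<exists>sigma. 0 < sigma \<and> sigma < eps \<and>
           Lc = (real Nt)^2 / (real Nr + real Nt)^2 * SNR powr (- 2 * (sigma + alpha))"
  shows "delta * B < P / N0 * ((real Nr + real Nt) / real Nt) * sqrt (Bc * Tc)
       \<and> delta * B powr (1 + eps) >
           (P / N0) powr (1 + eps) * ((real Nr + real Nt) / real Nt) * sqrt (Bc * Tc)"
proof -
  obtain sigma where sigma: "0 < sigma" "sigma < eps"
    and Lc: "Lc = (real Nt)^2 / (real Nr + real Nt)^2 * SNR powr (- 2 * (sigma + alpha))"
    using assms(16) by blast
  define c where "c = (real Nr + real Nt) / real Nt"
  have c: "c > 0" unfolding c_def using assms(6) by simp
  have SNR: "0 < SNR" "SNR < 1" using assms(1-3,8,9) by simp_all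
  have "sqrt (Bc * Tc) = \<bar>1 / c\<bar> * SNR powr (- (sigma + alpha))"
    using sqrt_square_mult_powr[OF SNR(1), of "1 / c" "- (sigma + alpha)"] Lc assms(15)
    by (simp add: c_def power_divide)
  then have sqrt_L: "sqrt (Bc * Tc) = SNR powr (- (sigma + alpha)) / c"
    using c by simp
  have PN: "P / N0 = SNR * B" using assms(2,3,8) by simp
  have upper: "SNR powr (1 - alpha) * B < P / N0 * c * sqrt (Bc * Tc)"
  proof -
    have "SNR powr (1 - alpha) < SNR powr (1 + - (sigma + alpha))"
      using SNR sigma by (intro powr_less_mono') auto
    then have "SNR powr (1 - alpha) * B < B powr 1 * SNR powr (1 + - (sigma + alpha))"
      using assms(3) by simp
    also have "\<dots> = (P / N0) powr 1 * c * sqrt (Bc * Tc)"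
      using powr_scaled_product_eq[OF SNR(1) assms(3), of c] c by (simp only: PN sqrt_L)
    finally show ?thesis
      using PN SNR(1) assms(3) by simp
  qed
  have lower: "SNR powr (1 - alpha) * B powr (1 + eps) > (P / N0) powr (1 + eps) * c * sqrt (Bc * Tc)"
  proof -
    have "(P / N0) powr (1 + eps) * c * sqrt (Bc * Tc) = B powr (1 + eps) * SNR powr (1 + eps + - (sigma + alpha))"
      using powr_scaled_product_eq[OF SNR(1) assms(3), of c] c by (simp only: PN sqrt_L)
    also have "\<dots> < B powr (1 + eps) * SNR powr (1 - alpha)"
      using SNR sigma assms(3) by (intro mult_strict_left_mono powr_less_mono') auto
    finally show ?thesis
      by (simp add: mult.commute)
  qed
  show ?thesis
    using upper lower by (simp add: assms(14) c_def)
qed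

end
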